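(* Assume the setting and condition (B) with sequence $s_{j_0}=s_-,s_{j_1}=s_+,\dots,s_{j_n}$, let $S'=S\setminus\{s_{j_n}\}$, $w=s_{j_1}\cdots s_{j_n}$, and let $\tau:W_{S'}\to W_{S/e,N}$ be the isomorphism with $\tau(s)=s$ for $s\notin\{s_{j_0},\dots,s_{j_n}\}$, $\tau(s_{j_\ell})=s_{j_{\ell+1}}$ ($1\le\ell\le n-1$), $\tau(s_{j_0})=s_0$. Define the linear map $\sigma^1:V_{S'}\to V_S$ by $\sigma^1(\alpha_s)=\alpha_s$ for $s\notin\{s_{j_0},\dots,s_{j_n}\}$ and $\sigma^1(\alpha_{s_{j_\ell}})=\sigma_{s_{j_1}}\cdots\sigma_{s_{j_n}}(\alpha_{s_{j_\ell}})$ for $0\le\ell\le n-1$. Then $\sigma^1$ is a linear isomorphism onto $V_{S/e}$, and for all $\alpha\in V_{S'}$, $x\in W_{S'}$, \[ \phi^{\mathrm{aff}}\big(\sigma^1(\alpha),\tau(x)\big)=\big(\sigma_w(\alpha),\,wxw^{-1}\big)\in V_S\rtimes W_{S,M}. \]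
   Context: A Coxeter matrix on $S$ is a symmetric matrix $M=(m_{s,s'})$ with entries in $\mathbb Z_{\ge1}\sqcup\{\infty\}$, $m_{s,s'}=1$ iff $s=s'$; $W_{S,M}$ is generated by $S$ with relations $(ss')^{m_{s,s'}}=1$ for $m_{s,s'}\ne\infty$. Edge contraction: $e=\{s_+,s_-\}$, $m_{s_+,s_-}=3$, $S/e=(S\setminus\{s_+,s_-\})\sqcup\{s_0\}$, $N=(n_{s,s'})$ with $n_{s,s}=1$, $n_{s,s'}=m_{s,s'}$ for distinct $s,s'\ne s_0$, and for $s\ne s_0$: $n_{s,s_0}=m_{s,s_+}+m_{s,s_-}-2$ if $m_{s,s_+}=2$ or $m_{s,s_-}=2$, and $n_{s,s_0}=\infty$ otherwise. $\phi:W_{S/e,N}\to W_{S,M}$ is the (injective) homomorphism $s\mapsto s$ ($s\ne s_0$), $s_0\mapsto s_+s_-s_+$. Condition (B): there exist $n\ge1$ and pairwise distinct $s_{j_0}=s_-,s_{j_1}=s_+,s_{j_2},\dots,s_{j_n}\in S$ with $m_{s_{j_k},s_{j_{k+1}}}=3$ ($0\le k\le n-1$), and for every $1\le k\le n$ and every $s\in S$ different from $s_{j_k}$, $s_{j_{k-1}}$ and (if $k<n$) $s_{j_{k+1}}$, $m_{s_{j_k},s}=2$. Reflection representation: $V_S=\bigoplus_{s\in S}\mathbb R\alpha_s$, $k_{s,s'}=2\cos(\pi/m_{s,s'})$ (with $\pi/\infty=0$), and $\sigma_s(\alpha_{s'})=\alpha_{s'}+k_{s,s'}\alpha_s$; $s\mapsto\sigma_s$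 gives a faithful representation $\sigma$ of $W_{S,M}$; write $\sigma_x$ for the image of $x$. For $S'\subseteq S$, $V_{S'}=\bigoplus_{s\in S'}\mathbb R\alpha_s\subseteq V_S$ is stable under the subgroup $W_{S'}$ generated by $S'$. Let $\alpha_{s_0}:=\alpha_{s_+}+\alpha_{s_-}$ and $V_{S/e}=\bigoplus_{s\in S/e}\mathbb R\alpha_s\subseteq V_S$; $W_{S/e,N}$ acts on $V_{S/e}$ by $\tilde\sigma_s(\alpha_{s'})=\alpha_{s'}+\tilde k_{s,s'}\alpha_s$ with $\tilde k_{s,s'}=2\cos(\pi/n_{s,s'})$. Semidirect products $V\rtimes W$ have multiplication $(\alpha,x)(\beta,y)=(\alpha+x\cdot\beta,xy)$, and $\phi^{\mathrm{aff}}:V_{S/e}\rtimes W_{S/e,N}\to V_S\rtimes W_{S,M}$ is $(\alpha,x)\mapsto(\alpha,\phi(x))$. *)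

theory Defs
  imports Complex_Main "HOL-Library.Extended_Nat"
begin

definition is_coxeter_matrix :: "'a set \<Rightarrow> ('a \<Rightarrow> 'a \<Rightarrow> enat) \<Rightarrow> bool" where
  "is_coxeter_matrix S M \<longleftrightarrow>
     (\<forall>s\<in>S. \<forall>t\<in>S. M s t = M t s \<and> 1 \<le> M s t \<and> (M s t = 1 \<longleftrightarrow> s = t))"

text \<open>Elements of W_{S,M} are represented by words (lists) over S; two words represent the same
  group element iff they are related by the congruence generated by the relations (s s')^m = 1
  for m = M s s' finite.  Since all generators are involutions, this monoid presentation
  presents the group W_{S,M}.\<close>
inductive cox_eq :: "'a set \<Rightarrow> ('a \<Rightarrow> 'a \<Rightarrow> enat) \<Rightarrow> 'a list \<Rightarrow> 'a list \<Rightarrow> bool"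
  for S M where
  refl: "cox_eq S M u u"
| sym: "cox_eq S M u v \<Longrightarrow> cox_eq S M v u"
| trans: "cox_eq S M u v \<Longrightarrow> cox_eq S M v x \<Longrightarrow> cox_eq S M u x"
| rel: "s \<in> S \<Longrightarrow> t \<in> S \<Longrightarrow> M s t = enat m \<Longrightarrow>
        cox_eq S M (u @ concat (replicate m [s, t]) @ v) (u @ v)"

text \<open>Inverse of an element represented by a word (generators are involutions).\<close>
definition word_inv :: "'a list \<Rightarrow> 'a list" where
  "word_inv w = rev w"

definition contr_val :: "('a \<Rightarrow> 'a \<Rightarrow> enat) \<Rightarrow> 'a \<Rightarrow> 'a \<Rightarrow> 'a \<Rightarrow> enat" where
  "contr_val M sp sm s =
     (if M s sp = 2 \<or> M s sm = 2 then M s sp + M s sm - 2 else \<infinity>)"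

text \<open>The contracted set S/e (s0 a fresh element) and the matrix N.\<close>
definition contr_set :: "'a set \<Rightarrow> 'a \<Rightarrow> 'a \<Rightarrow> 'a \<Rightarrow> 'a set" where
  "contr_set S sp sm s0 = (S - {sp, sm}) \<union> {s0}"

definition contr_mat :: "('a \<Rightarrow> 'a \<Rightarrow> enat) \<Rightarrow> 'a \<Rightarrow> 'a \<Rightarrow> 'a \<Rightarrow> 'a \<Rightarrow> 'a \<Rightarrow> enat" where
  "contr_mat M sp sm s0 s t =
     (if s = t then 1
      else if t = s0 then contr_val M sp sm s
      else if s = s0 then contr_val M sp sm t
      else M s t)"

definition phi_word :: "'a \<Rightarrow> 'a \<Rightarrow> 'a \<Rightarrow> 'a list \<Rightarrow> 'a list" where
  "phi_word sp sm s0 w = concat (map (\<lambda>s. if s = s0 then [sp, sm, sp] else [s]) w)"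

text \<open>Vectors of V_S are finitely supported real functions supported in S; alpha s is the basis vector.\<close>
definition vecs :: "'a set \<Rightarrow> ('a \<Rightarrow> real) set" where
  "vecs S = {v. finite {t. v t \<noteq> 0} \<and> (\<forall>t. t \<notin> S \<longrightarrow> v t = 0)}"

definition alpha :: "'a \<Rightarrow> 'a \<Rightarrow> real" where
  "alpha s = (\<lambda>t. if t = s then 1 else 0)"

definition kcoef :: "('a \<Rightarrow> 'a \<Rightarrow> enat) \<Rightarrow> 'a \<Rightarrow> 'a \<Rightarrow> real" where
  "kcoef M s t = (case M s t of enat m \<Rightarrow> 2 * cos (pi / real m) | \<infinity> \<Rightarrow> 2)"

text \<open>sigma_s (alpha_t) = alpha_t + k_{s,t} alpha_s, extended linearly.\<close>
definition sigma_gen :: "('a \<Rightarrow> 'a \<Rightarrow> enat) \<Rightarrow> 'a \<Rightarrow> ('a \<Rightarrow> real) \<Rightarrow> ('a \<Rightarrow> real)" where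
  "sigma_gen M s v = (\<lambda>t. v t + (if t = s then (\<Sum>t'\<in>{t'. v t' \<noteq> 0}. v t' * kcoef M s t') else 0))"

fun sigma_word :: "('a \<Rightarrow> 'a \<Rightarrow> enat) \<Rightarrow> 'a list \<Rightarrow> ('a \<Rightarrow> real) \<Rightarrow> ('a \<Rightarrow> real)" where
  "sigma_word M [] = id"
| "sigma_word M (s # w) = sigma_gen M s \<circ> sigma_word M w"

text \<open>V_{S/e} = span of alpha_s (s in S - {s+,s-}) and alpha_{s0} = alpha_{s+} + alpha_{s-}, inside V_S.\<close>
definition contr_vecs :: "'a set \<Rightarrow> 'a \<Rightarrow> 'a \<Rightarrow> ('a \<Rightarrow> real) set" where
  "contr_vecs S sp sm =
     {v. \<exists>a\<in>vecs (S - {sp, sm}). \<exists>b::real. v = (\<lambda>t. a t + b * (alpha sp t + alpha sm t))}"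

definition lin_ext :: "('a \<Rightarrow> 'a \<Rightarrow> real) \<Rightarrow> ('a \<Rightarrow> real) \<Rightarrow> ('a \<Rightarrow> real)" where
  "lin_ext f v = (\<lambda>t. \<Sum>s\<in>{s. v s \<noteq> 0}. v s * f s t)"

definition phi_aff :: "'a \<Rightarrow> 'a \<Rightarrow> 'a \<Rightarrow> ('a \<Rightarrow> real) \<times> 'a list \<Rightarrow> ('a \<Rightarrow> real) \<times> 'a list" where
  "phi_aff sp sm s0 p = (fst p, phi_word sp sm s0 (snd p))"

definition sd_eq :: "'a set \<Rightarrow> ('a \<Rightarrow> 'a \<Rightarrow> enat) \<Rightarrow> ('a \<Rightarrow> real) \<times> 'a list \<Rightarrow> ('a \<Rightarrow> real) \<times> 'a list \<Rightarrow> bool" where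
  "sd_eq S M p q \<longleftrightarrow> fst p = fst q \<and> cox_eq S M (snd p) (snd q)"

end

theory Submission
  imports Defs
begin

text \<open>
  Write \<open>c 0, \<dots>, c n\<close> for the chain of condition (B) and \<open>w = c 1 \<cdots> c n\<close>.
  Every generator off the chain commutes with all of \<open>w\<close>, and each chain element commutes
  with all but its neighbours; so conjugation by \<open>w\<close> fixes the generators off the chain,
  moves \<open>c l\<close> to \<open>c (l + 1)\<close> for \<open>1 \<le> l < n\<close> by the braid relation, and sends
  \<open>c 0\<close> to \<open>c 1 c 0 c 1 = \<phi>(s\<^sub>0)\<close>. This is the group component.
  On \<open>V\<^sub>S\<^sub>'\<close> the reflections \<open>\<sigma>\<^bsub>c n\<^esub>, \<dots>, \<sigma>\<^bsub>c 1\<^esub>\<close>, applied in this order, shift the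
  coordinates one step up the chain: \<open>(\<sigma>\<^sub>w v)(c k) = v(c (k - 1))\<close> for \<open>1 \<le> k \<le> n\<close>, all other
  coordinates unchanged. Hence \<open>\<sigma>\<^sub>w\<close> is injective on \<open>V\<^sub>S\<^sub>'\<close>, agrees with \<open>\<sigma>\<^sup>1\<close> there, and its
  image is the set of vectors with equal coordinates at \<open>s\<^sub>+ = c 1\<close> and \<open>s\<^sub>- = c 0\<close>,
  which is \<open>V\<^bsub>S/e\<^esub>\<close>.
\<close>

lemma kcoef_of_1: "M s t = 1 \<Longrightarrow> kcoef M s t = -2"
  by (simp add: kcoef_def one_enat_def)

lemma kcoef_of_2: "M s t = 2 \<Longrightarrow> kcoef M s t = 0"
  by (simp add: kcoef_def numeral_eq_enat cos_pi_half)

lemma kcoef_of_3: "M s t = 3 \<Longrightarrow> kcoef M s t = 1"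
  by (simp add: kcoef_def numeral_eq_enat cos_60)

lemma sigma_gen_eq_sum_over:
  assumes "finite {t. u t \<noteq> 0}" "finite F" "\<And>t. t \<notin> F \<Longrightarrow> u t * kcoef M s t = 0"
  shows "sigma_gen M s u = u(s := u s + (\<Sum>t\<in>F. u t * kcoef M s t))"
proof -
  have "(\<Sum>t\<in>{t. u t \<noteq> 0}. u t * kcoef M s t) = (\<Sum>t\<in>{t. u t \<noteq> 0} \<union> F. u t * kcoef M s t)"
    by (rule sum.mono_neutral_left) (use assms in auto)
  also have "\<dots> = (\<Sum>t\<in>F. u t * kcoef M s t)"
    by (rule sum.mono_neutral_right) (use assms in auto)
  finally have "(\<Sum>t\<in>{t. u t \<noteq> 0}. u t * kcoef M s t) = (\<Sum>t\<in>F. u t * kcoef M s t)" .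
  then show ?thesis
    unfolding sigma_gen_def by (simp add: fun_eq_iff)
qed

lemma sum_mult_alpha: "finite A \<Longrightarrow> (\<Sum>s\<in>A. v s * alpha s t) = (if t \<in> A then v t else 0)"
proof -
  assume "finite A"
  have "(\<Sum>s\<in>A. v s * alpha s t) = (\<Sum>s\<in>A. if s = t then v t else 0)"
    by (rule sum.cong) (auto simp: alpha_def)
  with \<open>finite A\<close> show ?thesis by (simp add: sum.delta')
qed

lemma alpha_in_vecs: "s \<in> A \<Longrightarrow> alpha s \<in> vecs A"
  by (auto simp: vecs_def alpha_def)

lemma vecs_lin_comb: "u \<in> vecs A \<Longrightarrow> v \<in> vecs A \<Longrightarrow> (\<lambda>t. a * u t + v t) \<in> vecs A"
proof -
  assume u: "u \<in> vecs A" and v: "v \<in> vecs A"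
  have "{t. a * u t + v t \<noteq> 0} \<subseteq> {t. u t \<noteq> 0} \<union> {t. v t \<noteq> 0}" by auto
  then have "finite {t. a * u t + v t \<noteq> 0}"
    by (rule finite_subset) (use u v in \<open>simp add: vecs_def\<close>)
  then show ?thesis using u v by (simp add: vecs_def)
qed

lemma contr_vecs_eq:
  assumes "sp \<in> S" "sm \<in> S" "sp \<noteq> sm"
  shows "contr_vecs S sp sm = {y \<in> vecs S. y sp = y sm}"
proof (intro set_eqI iffI)
  fix y assume "y \<in> contr_vecs S sp sm"
  then obtain a b where a: "a \<in> vecs (S - {sp, sm})"
    and y: "y = (\<lambda>t. a t + b * (alpha sp t + alpha sm t))"
    unfolding contr_vecs_def by blast
  have a_out: "a t = 0" if "t \<notin> S - {sp, sm}" for t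
    using a that by (simp add: vecs_def)
  have "{t. y t \<noteq> 0} \<subseteq> {t. a t \<noteq> 0} \<union> {sp, sm}" by (auto simp: y alpha_def)
  then have "finite {t. y t \<noteq> 0}" by (rule finite_subset) (use a in \<open>simp add: vecs_def\<close>)
  moreover have "y t = 0" if "t \<notin> S" for t
    using that assms a_out[of t] by (auto simp: y alpha_def)
  moreover have "y sp = y sm"
    using assms a_out[of sp] a_out[of sm] by (simp add: y alpha_def)
  ultimately show "y \<in> {y \<in> vecs S. y sp = y sm}" by (simp add: vecs_def)
next
  fix y assume y: "y \<in> {y \<in> vecs S. y sp = y sm}"
  define a where "a = (\<lambda>t. y t - y sp * (alpha sp t + alpha sm t))"
  have "{t. a t \<noteq> 0} \<subseteq> {t. y t \<noteq> 0} \<union> {sp, sm}" by (auto simp: a_def alpha_def)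
  then have "finite {t. a t \<noteq> 0}" by (rule finite_subset) (use y in \<open>simp add: vecs_def\<close>)
  moreover have "a t = 0" if "t \<notin> S - {sp, sm}" for t
    using that y assms by (auto simp: vecs_def a_def alpha_def)
  ultimately have "a \<in> vecs (S - {sp, sm})" by (simp add: vecs_def)
  moreover have "y = (\<lambda>t. a t + y sp * (alpha sp t + alpha sm t))" by (simp add: a_def)
  ultimately show "y \<in> contr_vecs S sp sm" unfolding contr_vecs_def by blast
qed

lemma phi_word_append: "phi_word sp sm s0 (u @ v) = phi_word sp sm s0 u @ phi_word sp sm s0 v"
  by (simp add: phi_word_def)

lemma cox_eq_in_context: "cox_eq S M u v \<Longrightarrow> cox_eq S M (p @ u @ q) (p @ v @ q)"
proof (induction rule: cox_eq.induct)
  case (rel s t m u v)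
  show ?case using cox_eq.rel[of s S t M m "p @ u" "v @ q"] rel by simp
qed (blast intro: cox_eq.refl cox_eq.sym cox_eq.trans)+

lemma cox_eq_append: "cox_eq S M u u' \<Longrightarrow> cox_eq S M v v' \<Longrightarrow> cox_eq S M (u @ v) (u' @ v')"
  by (metis cox_eq_in_context[of S M u u' "[]" v] cox_eq_in_context[of S M v v' u' "[]"]
      append_Nil append_Nil2 cox_eq.trans)

lemma cox_eq_cancel_square:
  "s \<in> S \<Longrightarrow> M s s = 1 \<Longrightarrow> cox_eq S M (p @ [s, s] @ q) (p @ q)"
  using cox_eq.rel[of s S s M 1 p q] by (simp add: one_enat_def)

lemma cox_eq_commute:
  assumes "s \<in> S" "t \<in> S" "M s t = 2" "M s s = 1" "M t t = 1"
  shows "cox_eq S M [s, t] [t, s]"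
proof -
  have "cox_eq S M ([t, s] @ concat (replicate 2 [s, t]) @ []) ([t, s] @ [])"
    by (rule cox_eq.rel) (use assms in \<open>auto simp: numeral_eq_enat\<close>)
  then have "cox_eq S M [t, s, s, t, s, t] [t, s]" by (simp add: numeral_2_eq_2)
  moreover have "cox_eq S M [t, s, s, t, s, t] [t, t, s, t]"
    using cox_eq_cancel_square[of s S M "[t]" "[t, s, t]"] assms by simp
  moreover have "cox_eq S M [t, t, s, t] [s, t]"
    using cox_eq_cancel_square[of t S M "[]" "[s, t]"] assms by simp
  ultimately show ?thesis by (meson cox_eq.sym cox_eq.trans)
qed

lemma cox_eq_braid3:
  assumes "s \<in> S" "t \<in> S" "M s t = 3" "M t t = 1"
  shows "cox_eq S M [s, t, s, t, s] [t]"
proof -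
  have "cox_eq S M ([] @ concat (replicate 3 [s, t]) @ [t]) ([] @ [t])"
    by (rule cox_eq.rel) (use assms in \<open>auto simp: numeral_eq_enat\<close>)
  then have "cox_eq S M [s, t, s, t, s, t, t] [t]" by (simp add: numeral_3_eq_3)
  moreover have "cox_eq S M [s, t, s, t, s, t, t] [s, t, s, t, s]"
    using cox_eq_cancel_square[of t S M "[s, t, s, t, s]" "[]"] assms by simp
  ultimately show ?thesis by (meson cox_eq.sym cox_eq.trans)
qed

lemma cox_eq_commute_past:
  assumes "s \<in> S" "M s s = 1" "\<forall>t\<in>set L. t \<in> S \<and> M s t = 2 \<and> M t t = 1"
  shows "cox_eq S M (s # L) (L @ [s])"
  using assms(3)
proof (induction L)
  case Nil
  then show ?case by (simp add: cox_eq.refl)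
next
  case (Cons t L)
  have "cox_eq S M ([] @ [s, t] @ L) ([] @ [t, s] @ L)"
    by (rule cox_eq_in_context, rule cox_eq_commute) (use assms Cons.prems in auto)
  moreover have "cox_eq S M ([t] @ (s # L) @ []) ([t] @ (L @ [s]) @ [])"
    by (rule cox_eq_in_context) (use Cons in auto)
  ultimately show ?case by (auto intro: cox_eq.trans)
qed

lemma cox_eq_append_rev:
  assumes "\<forall>t\<in>set L. t \<in> S \<and> M t t = 1"
  shows "cox_eq S M (L @ rev L) []"
  using assms
proof (induction L)
  case Nil
  then show ?case by (simp add: cox_eq.refl)
next
  case (Cons t L)
  have "cox_eq S M ([t] @ (L @ rev L) @ [t]) ([t] @ [] @ [t])"
    by (rule cox_eq_in_context) (use Cons in auto)
  moreover have "cox_eq S M ([] @ [t, t] @ []) ([] @ [])"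
    by (rule cox_eq_cancel_square) (use Cons in auto)
  ultimately show ?case by (auto intro: cox_eq.trans)
qed

lemma cox_eq_conj_commuting:
  assumes "s \<in> S" "M s s = 1" "\<forall>t\<in>set L. t \<in> S \<and> M s t = 2 \<and> M t t = 1"
  shows "cox_eq S M (L @ [s] @ rev L) [s]"
proof -
  have "cox_eq S M (L @ (s # rev L) @ []) (L @ (rev L @ [s]) @ [])"
    by (rule cox_eq_in_context, rule cox_eq_commute_past) (use assms in auto)
  moreover have "cox_eq S M ([] @ (L @ rev L) @ [s]) ([] @ [] @ [s])"
    by (rule cox_eq_in_context, rule cox_eq_append_rev) (use assms in auto)
  ultimately show ?thesis by (auto intro: cox_eq.trans)
qed

locale coxeter_chain =
  fixes S :: "'a set" and M :: "'a \<Rightarrow> 'a \<Rightarrow> enat" and c :: "nat \<Rightarrow> 'a" and n :: nat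
  assumes coxeter: "is_coxeter_matrix S M"
    and n_pos: "1 \<le> n"
    and chain_in_S: "\<forall>k\<le>n. c k \<in> S"
    and inj_chain: "inj_on c {0..n}"
    and M_chain: "\<forall>k<n. M (c k) (c (Suc k)) = 3"
    and M_off_chain: "\<forall>k\<in>{1..n}. \<forall>s\<in>S. s \<noteq> c k \<and> s \<noteq> c (k - 1) \<and> (k < n \<longrightarrow> s \<noteq> c (Suc k))
               \<longrightarrow> M (c k) s = 2"
begin

abbreviation w :: "'a list" where
  "w \<equiv> map c [1..<Suc n]"

lemma chain_mem: "k \<le> n \<Longrightarrow> c k \<in> S"
  using chain_in_S by auto

lemma chain_eq_iff: "i \<le> n \<Longrightarrow> j \<le> n \<Longrightarrow> c i = c j \<longleftrightarrow> i = j"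
  using inj_chain by (auto simp: inj_on_def)

lemma M_sym: "s \<in> S \<Longrightarrow> t \<in> S \<Longrightarrow> M s t = M t s"
  using coxeter by (auto simp: is_coxeter_matrix_def)

lemma M_diag: "s \<in> S \<Longrightarrow> M s s = 1"
  using coxeter by (auto simp: is_coxeter_matrix_def)

lemma M_chain_next: "k < n \<Longrightarrow> M (c k) (c (Suc k)) = 3"
  using M_chain by auto

lemma M_chain_prev: "k < n \<Longrightarrow> M (c (Suc k)) (c k) = 3"
  using M_chain_next M_sym chain_mem by (metis Suc_leI less_imp_le)

lemma M_chain_far:
  assumes "1 \<le> k" "k \<le> n" "s \<in> S" "s \<noteq> c k" "s \<noteq> c (k - 1)" "k < n \<Longrightarrow> s \<noteq> c (Suc k)"
  shows "M (c k) s = 2" "M s (c k) = 2"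
  using M_off_chain assms M_sym[of s "c k"] chain_mem[of k] by auto

lemma w_generators: "\<forall>t\<in>set w. t \<in> S \<and> M t t = 1"
  using chain_mem M_diag by auto

lemma w_rev_cancel: "cox_eq S M (w @ rev w) []" "cox_eq S M (rev w @ w) []"
  using cox_eq_append_rev[of w S M] cox_eq_append_rev[of "rev w" S M] w_generators by auto

lemma conj_off_chain:
  assumes "s \<in> S" "s \<notin> c ` {0..n}"
  shows "cox_eq S M (w @ [s] @ rev w) [s]"
proof (rule cox_eq_conj_commuting)
  show "\<forall>t\<in>set w. t \<in> S \<and> M s t = 2 \<and> M t t = 1"
    using assms M_chain_far(2) w_generators by fastforce
qed (use assms M_diag in auto)

text \<open>All letters of \<open>w\<close> after the first commute with \<open>c 0\<close>.\<close>
lemma conj_chain_start: "cox_eq S M (w @ [c 0] @ rev w) [c 1, c 0, c 1]"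
proof -
  define L where "L = map c [2..<Suc n]"
  have "[1..<Suc n] = 1 # [2..<Suc n]"
    using n_pos upt_conv_Cons[of 1 "Suc n"] by (simp add: numeral_2_eq_2 del: upt_Suc)
  then have w: "w = c 1 # L" unfolding L_def by simp
  have "cox_eq S M (L @ [c 0] @ rev L) [c 0]"
  proof (rule cox_eq_conj_commuting)
    show "\<forall>t\<in>set L. t \<in> S \<and> M (c 0) t = 2 \<and> M t t = 1"
      using M_chain_far(2) chain_eq_iff chain_mem M_diag by (fastforce simp: L_def)
  qed (use chain_mem M_diag in auto)
  then have "cox_eq S M ([c 1] @ (L @ [c 0] @ rev L) @ [c 1]) ([c 1] @ [c 0] @ [c 1])"
    by (rule cox_eq_in_context)
  then show ?thesis using w by simp
qed

text \<open>Split \<open>w = P c\<^sub>l c\<^sub>l\<^sub>+\<^sub>1 Q\<close>: \<open>Q\<close> commutes with \<open>c l\<close>, then the braid relation turns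
  \<open>c\<^sub>l c\<^sub>l\<^sub>+\<^sub>1 c\<^sub>l c\<^sub>l\<^sub>+\<^sub>1 c\<^sub>l\<close> into \<open>c\<^sub>l\<^sub>+\<^sub>1\<close>, which commutes with \<open>P\<close>.\<close>
lemma conj_chain_inner:
  assumes l: "1 \<le> l" "l < n"
  shows "cox_eq S M (w @ [c l] @ rev w) [c (Suc l)]"
proof -
  define P where "P = map c [1..<l]"
  define Q where "Q = map c [Suc (Suc l)..<Suc n]"
  have "[1..<Suc n] = [1..<l] @ [l..<Suc n]"
    using l upt_add_eq_append[of 1 l "Suc n - l"] by simp
  also have "[l..<Suc n] = l # Suc l # [Suc (Suc l)..<Suc n]"
    using l by (simp add: upt_conv_Cons)
  finally have w: "w @ [c l] @ rev w
      = (P @ [c l, c (Suc l)]) @ (Q @ [c l] @ rev Q) @ ([c (Suc l), c l] @ rev P)"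
    by (simp add: P_def Q_def)
  have "cox_eq S M (Q @ [c l] @ rev Q) [c l]"
  proof (rule cox_eq_conj_commuting)
    show "\<forall>t\<in>set Q. t \<in> S \<and> M (c l) t = 2 \<and> M t t = 1"
      using l M_chain_far(2) chain_eq_iff chain_mem M_diag by (fastforce simp: Q_def)
  qed (use chain_mem M_diag l in auto)
  from cox_eq_in_context[OF this, of "P @ [c l, c (Suc l)]" "[c (Suc l), c l] @ rev P"]
  have "cox_eq S M (w @ [c l] @ rev w) (P @ [c l, c (Suc l), c l, c (Suc l), c l] @ rev P)"
    unfolding w by simp
  moreover have "cox_eq S M [c l, c (Suc l), c l, c (Suc l), c l] [c (Suc l)]"
    by (rule cox_eq_braid3) (use l chain_mem M_chain_next M_diag in auto)
  then have "cox_eq S M (P @ [c l, c (Suc l), c l, c (Suc l), c l] @ rev P) (P @ [c (Suc l)] @ rev P)"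
    by (rule cox_eq_in_context)
  moreover have "cox_eq S M (P @ [c (Suc l)] @ rev P) [c (Suc l)]"
  proof (rule cox_eq_conj_commuting)
    show "\<forall>t\<in>set P. t \<in> S \<and> M (c (Suc l)) t = 2 \<and> M t t = 1"
      using l M_chain_far(1) chain_eq_iff chain_mem M_diag by (fastforce simp: P_def)
  qed (use chain_mem M_diag l in auto)
  ultimately show ?thesis by (meson cox_eq.trans)
qed

lemma sigma_gen_chain_vertex:
  assumes u: "u \<in> vecs S" and i: "1 \<le> i" "i \<le> n"
  shows "sigma_gen M (c i) u
    = u(c i := u (c (i - 1)) - u (c i) + (if i < n then u (c (Suc i)) else 0))"
proof -
  define F where "F = {c (i - 1), c i} \<union> (if i < n then {c (Suc i)} else {})"
  have "u t * kcoef M (c i) t = 0" if "t \<notin> F" for t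
  proof (cases "t \<in> S")
    case True
    then have "M (c i) t = 2"
      by (rule M_chain_far(1)[OF i]) (use that in \<open>auto simp: F_def\<close>)
    then show ?thesis by (simp add: kcoef_of_2)
  next
    case False
    then show ?thesis using u by (simp add: vecs_def)
  qed
  then have "sigma_gen M (c i) u = u(c i := u (c i) + (\<Sum>t\<in>F. u t * kcoef M (c i) t))"
    using u by (intro sigma_gen_eq_sum_over) (auto simp: vecs_def F_def)
  moreover have "(\<Sum>t\<in>F. u t * kcoef M (c i) t)
      = u (c (i - 1)) - 2 * u (c i) + (if i < n then u (c (Suc i)) else 0)"
  proof -
    have k: "kcoef M (c i) (c (i - 1)) = 1" "kcoef M (c i) (c i) = -2"
      using M_chain_prev[of "i - 1"] M_diag chain_mem i by (auto simp: kcoef_of_3 kcoef_of_1)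
    have "c (i - 1) \<noteq> c i" using i chain_eq_iff by simp
    moreover have "c (Suc i) \<noteq> c i \<and> c (Suc i) \<noteq> c (i - 1) \<and> kcoef M (c i) (c (Suc i)) = 1"
      if "i < n"
      using that i chain_eq_iff M_chain_next by (simp add: kcoef_of_3)
    ultimately show ?thesis
      using k by (cases "i < n") (simp_all add: F_def)
  qed
  ultimately show ?thesis by (simp add: algebra_simps)
qed

definition shifted_from :: "nat \<Rightarrow> ('a \<Rightarrow> real) \<Rightarrow> ('a \<Rightarrow> real) \<Rightarrow> bool" where
  "shifted_from m u v \<longleftrightarrow> u \<in> vecs S
     \<and> (\<forall>k. m \<le> k \<and> k \<le> n \<longrightarrow> u (c k) = v (c (k - 1)))
     \<and> (\<forall>t. t \<notin> c ` {m..n} \<longrightarrow> u t = v t)"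

lemma shifted_from_step:
  assumes v: "v \<in> vecs (S - {c n})" and i: "1 \<le> i" "i \<le> n"
    and shifted: "shifted_from (Suc i) u v"
  shows "shifted_from i (sigma_gen M (c i) u) v"
proof -
  have uS: "u \<in> vecs S"
    and u_shift: "\<And>k. Suc i \<le> k \<Longrightarrow> k \<le> n \<Longrightarrow> u (c k) = v (c (k - 1))"
    and u_fix: "\<And>t. t \<notin> c ` {Suc i..n} \<Longrightarrow> u t = v t"
    using shifted unfolding shifted_from_def by blast+
  have step: "sigma_gen M (c i) u = u(c i := v (c (i - 1)))"
  proof -
    have "c i \<notin> c ` {Suc i..n}" "c (i - 1) \<notin> c ` {Suc i..n}"
      using i chain_eq_iff by force+
    then have "u (c i) = v (c i)" "u (c (i - 1)) = v (c (i - 1))"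
      using u_fix by blast+
    moreover have "(if i < n then u (c (Suc i)) else 0) = v (c i)"
      using u_shift v i by (auto simp: vecs_def)
    ultimately show ?thesis
      unfolding sigma_gen_chain_vertex[OF uS i] by (simp only:) simp
  qed
  show ?thesis
    unfolding step shifted_from_def
  proof (intro conjI allI impI)
    have "finite {t. u t \<noteq> 0}" "\<forall>t. t \<notin> S \<longrightarrow> u t = 0"
      using uS by (simp_all add: vecs_def)
    moreover have "{t. (u(c i := v (c (i - 1)))) t \<noteq> 0} \<subseteq> insert (c i) {t. u t \<noteq> 0}"
      by auto
    ultimately show "u(c i := v (c (i - 1))) \<in> vecs S"
      using chain_mem[of i] i unfolding vecs_def by (simp add: finite_subset)
  next
    fix k assume k: "i \<le> k \<and> k \<le> n"
    show "(u(c i := v (c (i - 1)))) (c k) = v (c (k - 1))"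
    proof (cases "k = i")
      case False
      then have "c k \<noteq> c i" using k i chain_eq_iff by auto
      then show ?thesis using u_shift k False by simp
    qed simp
  next
    fix t assume "t \<notin> c ` {i..n}"
    then have "t \<noteq> c i" "t \<notin> c ` {Suc i..n}" using i by auto
    then show "(u(c i := v (c (i - 1)))) t = v t" using u_fix by simp
  qed
qed

lemma sigma_word_chain_suffix:
  assumes v: "v \<in> vecs (S - {c n})" and m: "1 \<le> m" "m \<le> Suc n"
  shows "shifted_from m (sigma_word M (map c [m..<Suc n]) v) v"
  using m(2)
proof (induction rule: inc_induct)
  case base
  show ?case using v by (auto simp: shifted_from_def vecs_def)
next
  case (step i)
  then have "sigma_word M (map c [i..<Suc n]) v
      = sigma_gen M (c i) (sigma_word M (map c [Suc i..<Suc n]) v)"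
    using upt_conv_Cons[of i "Suc n"] by (simp del: upt_Suc)
  then show ?case
    using shifted_from_step[OF v _ _ step.IH] step m by simp
qed

lemma sigma_w_in_vecs: "v \<in> vecs (S - {c n}) \<Longrightarrow> sigma_word M w v \<in> vecs S"
  and sigma_w_chain: "v \<in> vecs (S - {c n}) \<Longrightarrow> 1 \<le> k \<Longrightarrow> k \<le> n \<Longrightarrow> sigma_word M w v (c k) = v (c (k - 1))"
  and sigma_w_off_chain: "v \<in> vecs (S - {c n}) \<Longrightarrow> t \<notin> c ` {1..n} \<Longrightarrow> sigma_word M w v t = v t"
  using sigma_word_chain_suffix[of v 1] by (auto simp: shifted_from_def)

lemma sigma_w_eval: "\<exists>t'. \<forall>v\<in>vecs (S - {c n}). sigma_word M w v t = v t'"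
proof (cases "t \<in> c ` {1..n}")
  case True
  then obtain k where "1 \<le> k" "k \<le> n" "t = c k" by auto
  then show ?thesis using sigma_w_chain by blast
next
  case False
  then show ?thesis using sigma_w_off_chain by blast
qed

lemma sigma_w_linear:
  assumes "u \<in> vecs (S - {c n})" "v \<in> vecs (S - {c n})"
  shows "sigma_word M w (\<lambda>t. a * u t + v t) = (\<lambda>t. a * sigma_word M w u t + sigma_word M w v t)"
proof
  fix t
  obtain t' where "\<forall>v\<in>vecs (S - {c n}). sigma_word M w v t = v t'"
    using sigma_w_eval by blast
  then show "sigma_word M w (\<lambda>t. a * u t + v t) t = a * sigma_word M w u t + sigma_word M w v t"
    using assms vecs_lin_comb[OF assms] by (simp del: upt_Suc)
qed

lemma sigma_w_alpha_off_chain: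
  assumes s: "s \<in> S - {c n}" "s \<notin> c ` {0..<n}"
  shows "sigma_word M w (alpha s) = alpha s"
proof
  fix t
  show "sigma_word M w (alpha s) t = alpha s t"
  proof (cases "t \<in> c ` {1..n}")
    case True
    then obtain k where k: "1 \<le> k" "k \<le> n" "t = c k" by auto
    moreover have "s \<noteq> c (k - 1)" "s \<noteq> c k" using s k by (auto simp: le_less)
    ultimately show ?thesis
      using sigma_w_chain[OF alpha_in_vecs[OF s(1)]] by (simp add: alpha_def)
  next
    case False
    then show ?thesis using sigma_w_off_chain[OF alpha_in_vecs[OF s(1)]] by simp
  qed
qed

lemma lin_ext_eq_sigma_w:
  assumes v: "v \<in> vecs (S - {c n})"
  shows "lin_ext (\<lambda>s. if s \<in> c ` {0..<n} then sigma_word M w (alpha s) else alpha s) v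
    = sigma_word M w v"
proof (rule ext)
  fix t
  obtain t' where t': "\<forall>v\<in>vecs (S - {c n}). sigma_word M w v t = v t'"
    using sigma_w_eval by blast
  have supp: "finite {s. v s \<noteq> 0}" "\<And>s. v s \<noteq> 0 \<Longrightarrow> s \<in> S - {c n}"
    using v by (auto simp: vecs_def)
  have "lin_ext (\<lambda>s. if s \<in> c ` {0..<n} then sigma_word M w (alpha s) else alpha s) v t
      = (\<Sum>s\<in>{s. v s \<noteq> 0}. v s * sigma_word M w (alpha s) t)"
    unfolding lin_ext_def using supp(2) sigma_w_alpha_off_chain
    by (intro sum.cong) (auto simp del: upt_Suc)
  also have "\<dots> = (\<Sum>s\<in>{s. v s \<noteq> 0}. v s * alpha s t')"
  proof (rule sum.cong[OF HOL.refl])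
    fix s assume "s \<in> {s. v s \<noteq> 0}"
    then have "alpha s \<in> vecs (S - {c n})" using supp(2) by (simp add: alpha_in_vecs)
    then show "v s * sigma_word M w (alpha s) t = v s * alpha s t'" using t' by simp
  qed
  also have "\<dots> = v t'"
    using sum_mult_alpha[OF supp(1)] by (simp del: upt_Suc)
  also have "\<dots> = sigma_word M w v t"
    using t' v by (simp del: upt_Suc)
  finally show "lin_ext (\<lambda>s. if s \<in> c ` {0..<n} then sigma_word M w (alpha s) else alpha s) v t
    = sigma_word M w v t" .
qed

lemma inj_on_sigma_w: "inj_on (sigma_word M w) (vecs (S - {c n}))"
proof (rule inj_onI)
  fix u v assume u: "u \<in> vecs (S - {c n})" and v: "v \<in> vecs (S - {c n})"
    and eq: "sigma_word M w u = sigma_word M w v"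
  show "u = v"
  proof
    fix t
    consider (chain) l where "l < n" "t = c l" | (last) "t = c n" | (off) "t \<notin> c ` {0..n}"
      by (cases "t \<in> c ` {0..n}") (force simp: le_less)+
    then show "u t = v t"
    proof cases
      case chain
      then show ?thesis
        using sigma_w_chain[OF u, of "Suc l"] sigma_w_chain[OF v, of "Suc l"] eq by simp
    next
      case last
      then show ?thesis using u v by (simp add: vecs_def)
    next
      case off
      then have "t \<notin> c ` {1..n}" by auto
      then show ?thesis using sigma_w_off_chain[OF u] sigma_w_off_chain[OF v] eq by metis
    qed
  qed
qed

definition unshift :: "('a \<Rightarrow> real) \<Rightarrow> 'a \<Rightarrow> real" where
  "unshift y t = (if t \<in> c ` {0..<n} then y (c (Suc (the_inv_into {0..n} c t)))
                  else if t = c n then 0 else y t)"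

lemma unshift_chain: "k < n \<Longrightarrow> unshift y (c k) = y (c (Suc k))"
  using the_inv_into_f_f[OF inj_chain, of k] by (simp add: unshift_def)

lemma unshift_off_chain: "t \<notin> c ` {0..n} \<Longrightarrow> unshift y t = y t"
  by (auto simp: unshift_def)

lemma unshift_in_vecs:
  assumes y: "y \<in> vecs S"
  shows "unshift y \<in> vecs (S - {c n})"
proof -
  have "{t. unshift y t \<noteq> 0} \<subseteq> c ` {0..n} \<union> {t. y t \<noteq> 0}" by (auto simp: unshift_def)
  then have "finite {t. unshift y t \<noteq> 0}"
    by (rule finite_subset) (use y in \<open>simp add: vecs_def\<close>)
  moreover have "unshift y t = 0" if "t \<notin> S - {c n}" for t
  proof (cases "t = c n")
    case False
    with that have "t \<notin> S" by blast
    then have "t \<notin> c ` {0..<n}" "y t = 0" using chain_mem y by (auto simp: vecs_def)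
    then show ?thesis by (simp add: unshift_def)
  next
    case True
    moreover have "c n \<notin> c ` {0..<n}" using chain_eq_iff by force
    ultimately show ?thesis by (simp add: unshift_def)
  qed
  ultimately show ?thesis by (simp add: vecs_def)
qed

lemma sigma_w_unshift:
  assumes y: "y \<in> vecs S" "y (c 1) = y (c 0)"
  shows "sigma_word M w (unshift y) = y"
proof (rule ext)
  fix t
  note v = unshift_in_vecs[OF y(1)]
  consider (shifted) k where "1 \<le> k" "k \<le> n" "t = c k" | (start) "t = c 0"
    | (off) "t \<notin> c ` {0..n}"
  proof (cases "t \<in> c ` {0..n}")
    case True
    then obtain k where "k \<le> n" "t = c k" by auto
    then show ?thesis using that by (cases k) auto
  qed (use that in blast)
  then show "sigma_word M w (unshift y) t = y t"
  proof cases
    case shifted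
    then show ?thesis using sigma_w_chain[OF v] unshift_chain[of "k - 1"] by simp
  next
    case start
    moreover have "c 0 \<notin> c ` {1..n}" using chain_eq_iff by force
    ultimately show ?thesis
      using sigma_w_off_chain[OF v] unshift_chain[of 0] n_pos y by simp
  next
    case off
    then have "t \<notin> c ` {1..n}" by auto
    then show ?thesis using sigma_w_off_chain[OF v] unshift_off_chain[OF off] by simp
  qed
qed

lemma sigma_w_image: "sigma_word M w ` vecs (S - {c n}) = {y \<in> vecs S. y (c 1) = y (c 0)}"
proof (intro set_eqI iffI)
  fix y assume "y \<in> sigma_word M w ` vecs (S - {c n})"
  then obtain v where v: "v \<in> vecs (S - {c n})" and y: "y = sigma_word M w v" by blast
  have "c 0 \<notin> c ` {1..n}" using chain_eq_iff by force
  then show "y \<in> {y \<in> vecs S. y (c 1) = y (c 0)}"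
    using sigma_w_in_vecs[OF v] sigma_w_chain[OF v, of 1] sigma_w_off_chain[OF v, of "c 0"] n_pos
    by (simp add: y)
next
  fix y assume "y \<in> {y \<in> vecs S. y (c 1) = y (c 0)}"
  then show "y \<in> sigma_word M w ` vecs (S - {c n})"
    using sigma_w_unshift[of y] unshift_in_vecs[of y] by force
qed

end

locale chain_contraction = coxeter_chain S M c n
  for S :: "'a set" and M c n +
  fixes s0 :: 'a and tau :: "'a \<Rightarrow> 'a"
  assumes s0_fresh: "s0 \<notin> S"
    and tau_off_chain: "\<forall>s\<in>S - {c n}. s \<notin> c ` {0..n} \<longrightarrow> tau s = s"
    and tau_chain: "\<forall>l. 1 \<le> l \<and> l < n \<longrightarrow> tau (c l) = c (Suc l)"
    and tau_start: "tau (c 0) = s0"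
begin

lemma phi_tau_generator:
  assumes s: "s \<in> S - {c n}"
  shows "cox_eq S M (phi_word (c 1) (c 0) s0 [tau s]) (w @ [s] @ rev w)"
proof (cases "s \<in> c ` {0..n}")
  case True
  then obtain l where l: "l < n" "s = c l"
    using s by (auto simp: le_less)
  show ?thesis
  proof (cases "l = 0")
    case True
    then show ?thesis
      using conj_chain_start l tau_start by (simp add: phi_word_def cox_eq.sym)
  next
    case False
    then have "phi_word (c 1) (c 0) s0 [tau s] = [c (Suc l)]"
      using l tau_chain s0_fresh chain_mem[of "Suc l"] by (auto simp: phi_word_def)
    then show ?thesis
      using conj_chain_inner[of l] False l by (simp add: cox_eq.sym)
  qed
next
  case False
  then have "phi_word (c 1) (c 0) s0 [tau s] = [s]"
    using s s0_fresh tau_off_chain by (auto simp: phi_word_def)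
  then show ?thesis
    using conj_off_chain[of s] False s by (simp add: cox_eq.sym)
qed

lemma phi_tau_conj:
  "set x \<subseteq> S - {c n} \<Longrightarrow> cox_eq S M (phi_word (c 1) (c 0) s0 (map tau x)) (w @ x @ rev w)"
proof (induction x)
  case Nil
  show ?case using w_rev_cancel(1) by (simp add: phi_word_def cox_eq.sym del: upt_Suc)
next
  case (Cons s x)
  have "cox_eq S M (phi_word (c 1) (c 0) s0 [tau s] @ phi_word (c 1) (c 0) s0 (map tau x))
      ((w @ [s]) @ (rev w @ w) @ (x @ rev w))"
    using cox_eq_append[OF phi_tau_generator Cons.IH] Cons.prems by simp
  moreover have "cox_eq S M ((w @ [s]) @ (rev w @ w) @ (x @ rev w)) ((w @ [s]) @ [] @ (x @ rev w))"
    by (rule cox_eq_in_context[OF w_rev_cancel(2)])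
  ultimately show ?case
    using phi_word_append[of "c 1" "c 0" s0 "[tau s]" "map tau x"] by (auto intro: cox_eq.trans)
qed

end

theorem mainTheorem3:
  fixes S :: "'a set" and M :: "'a \<Rightarrow> 'a \<Rightarrow> enat"
    and sp sm s0 :: 'a and c :: "nat \<Rightarrow> 'a" and n :: nat
    and tau :: "'a \<Rightarrow> 'a"
  assumes cox: "is_coxeter_matrix S M"
    and sp: "sp \<in> S" and sm: "sm \<in> S" and e3: "M sp sm = 3"
    and s0: "s0 \<notin> S"
    \<comment> \<open>condition (B)\<close>
    and n1: "1 \<le> n"
    and c_S: "\<forall>k\<le>n. c k \<in> S"
    and c_inj: "inj_on c {0..n}"
    and c0: "c 0 = sm" and c1: "c 1 = sp"
    and c3: "\<forall>k<n. M (c k) (c (Suc k)) = 3"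
    and c2: "\<forall>k\<in>{1..n}. \<forall>s\<in>S. s \<noteq> c k \<and> s \<noteq> c (k - 1) \<and> (k < n \<longrightarrow> s \<noteq> c (Suc k))
               \<longrightarrow> M (c k) s = 2"
    \<comment> \<open>tau on the generators of W_{S'}, S' = S - {c n}\<close>
    and tau_out: "\<forall>s\<in>S - {c n}. s \<notin> c ` {0..n} \<longrightarrow> tau s = s"
    and tau_chain: "\<forall>l. 1 \<le> l \<and> l < n \<longrightarrow> tau (c l) = c (Suc l)"
    and tau0: "tau (c 0) = s0"
  shows
    "(let S' = S - {c n};
          w = map c [1..<Suc n];
          sigma1 = lin_ext (\<lambda>s. if s \<in> c ` {0..<n} then sigma_word M w (alpha s) else alpha s)
      in (\<forall>u\<in>vecs S'. \<forall>v\<in>vecs S'. \<forall>a::real.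
              sigma1 (\<lambda>t. a * u t + v t) = (\<lambda>t. a * sigma1 u t + sigma1 v t))
         \<and> inj_on sigma1 (vecs S')
         \<and> sigma1 ` vecs S' = contr_vecs S sp sm
         \<and> (\<forall>\<alpha>\<in>vecs S'. \<forall>x. set x \<subseteq> S' \<longrightarrow>
              sd_eq S M (phi_aff sp sm s0 (sigma1 \<alpha>, map tau x))
                        (sigma_word M w \<alpha>, w @ x @ word_inv w)))"
proof -
  interpret chain_contraction S M c n s0 tau
    using cox n1 c_S c_inj c3 c2 s0 tau_out tau_chain tau0 by unfold_locales
  let ?sigma1 = "lin_ext (\<lambda>s. if s \<in> c ` {0..<n} then sigma_word M w (alpha s) else alpha s)"
  have sigma1: "?sigma1 v = sigma_word M w v" if "v \<in> vecs (S - {c n})" for v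
    using lin_ext_eq_sigma_w[OF that] .
  have "\<forall>u\<in>vecs (S - {c n}). \<forall>v\<in>vecs (S - {c n}). \<forall>a::real.
      ?sigma1 (\<lambda>t. a * u t + v t) = (\<lambda>t. a * ?sigma1 u t + ?sigma1 v t)"
  proof (intro ballI allI)
    fix u v and a :: real assume u: "u \<in> vecs (S - {c n})" and v: "v \<in> vecs (S - {c n})"
    show "?sigma1 (\<lambda>t. a * u t + v t) = (\<lambda>t. a * ?sigma1 u t + ?sigma1 v t)"
      by (simp only: sigma1[OF u] sigma1[OF v] sigma1[OF vecs_lin_comb[OF u v]] sigma_w_linear[OF u v])
  qed
  moreover have "inj_on ?sigma1 (vecs (S - {c n}))"
    using inj_on_sigma_w inj_on_cong[of _ _ "sigma_word M w"] sigma1 by blast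
  moreover have "?sigma1 ` vecs (S - {c n}) = contr_vecs S sp sm"
  proof -
    have "sp \<noteq> sm" using chain_eq_iff[of 1 0] n1 c0 c1 by simp
    then show ?thesis
      using sigma_w_image contr_vecs_eq[OF sp sm] sigma1 c0 c1 by (simp cong: image_cong del: upt_Suc)
  qed
  moreover have "\<forall>\<alpha>\<in>vecs (S - {c n}). \<forall>x. set x \<subseteq> S - {c n} \<longrightarrow>
      sd_eq S M (phi_aff sp sm s0 (?sigma1 \<alpha>, map tau x)) (sigma_word M w \<alpha>, w @ x @ word_inv w)"
    using sigma1 phi_tau_conj unfolding c0 c1 by (simp add: sd_eq_def phi_aff_def word_inv_def del: upt_Suc)
  ultimately show ?thesis
    unfolding Let_def by blast
qed

end
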